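(* For each $n$ let $\boldsymbol{P}\in\mathbb{R}^{n\times n}$ be a deterministic permutation matrix with $\mathrm{tr}[\boldsymbol{P}]=0$, and let $\boldsymbol{w}=(w_1,\ldots,w_n)^\top$ have i.i.d. entries from $\mathbb{P}_w\in\mathcal{D}_1$ (not depending on $n$). Then for any fixed $\delta>0$, $\lim_{n\to\infty}\mathbb{P}\bigl(|\boldsymbol{w}^\top\boldsymbol{P}\boldsymbol{w}|/n>\delta\bigr)=0$.
   Context: $\mathcal{D}_1$ is the class of distributions of $\xi$ with $\mathbb{E}[\xi]=0$ and $1\le\mathbb{E}[|\xi|]\le2$. *)

theory Defs
  imports "HOL-Probability.Probability"
begin

text \<open>n x n real matrices are represented as functions nat => nat => real,
  only entries with indices below n are relevant.\<close>

definition perm_matrix :: "nat \<Rightarrow> (nat \<Rightarrow> nat \<Rightarrow> real) \<Rightarrow> bool" where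
  "perm_matrix n P \<longleftrightarrow>
     (\<exists>\<sigma>. \<sigma> permutes {..<n} \<and> (\<forall>i<n. \<forall>j<n. P i j = (if \<sigma> i = j then 1 else 0)))"

definition mat_trace :: "nat \<Rightarrow> (nat \<Rightarrow> nat \<Rightarrow> real) \<Rightarrow> real" where
  "mat_trace n P = (\<Sum>i<n. P i i)"

definition quad_form :: "nat \<Rightarrow> (nat \<Rightarrow> nat \<Rightarrow> real) \<Rightarrow> (nat \<Rightarrow> real) \<Rightarrow> real" where
  "quad_form n P w = (\<Sum>i<n. \<Sum>j<n. w i * P i j * w j)"

definition in_D1 :: "real measure \<Rightarrow> bool" where
  "in_D1 \<mu> \<longleftrightarrow> prob_space \<mu> \<and> sets \<mu> = sets borel \<and> integrable \<mu> (\<lambda>x. x)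
     \<and> (\<integral>x. x \<partial>\<mu>) = 0 \<and> 1 \<le> (\<integral>x. \<bar>x\<bar> \<partial>\<mu>) \<and> (\<integral>x. \<bar>x\<bar> \<partial>\<mu>) \<le> 2"

end

theory Submission
  imports Defs
begin

(* Let sigma be the fixed-point-free permutation encoded by P, so that w^T P w = Q(w) =
   sum_i w_i w_(sigma i).  Truncate at level K and recentre: w = a(w) + b(w) with
   a(w) = trunc_K(w) - E trunc_K(w).  Then |Q| <= |A| + S, where A = sum_i a_i a_(sigma i)
   and S = sum_i (|a_i| |b_(sigma i)| + |b_i| |w_(sigma i)|).  The a_i are independent, centred
   and bounded by 2K, and a term a_i a_(sigma i) a_k a_(sigma k) has mean zero unless
   k is i or sigma i, so E A^2 <= 32 n K^4.  By independence E S <= 3 n E|w| E|b|.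
   Chebyshev and Markov give P(|Q| > n delta) <= 128 K^4 / (delta^2 n) + 6 E|w| E|b| / delta,
   and E|b| -> 0 as K -> infinity by dominated convergence. *)

lemma product_prob_space_const:
  assumes "prob_space M"
  shows "product_prob_space (\<lambda>_. M)"
  using assms
  unfolding product_prob_space_def product_prob_space_axioms_def product_sigma_finite_def
  by (auto simp: prob_space_imp_sigma_finite)

context product_prob_space
begin

lemma
  fixes g h :: "'a \<Rightarrow> real"
  assumes "finite I" "i \<in> I" "j \<in> I" "i \<noteq> j" "integrable (M i) g" "integrable (M j) h"
  shows integrable_PiM_coordinate_pair: "integrable (PiM I M) (\<lambda>x. g (x i) * h (x j))"
    and integral_PiM_coordinate_pair:
      "(\<integral>x. g (x i) * h (x j) \<partial>PiM I M) = (\<integral>y. g y \<partial>M i) * (\<integral>y. h y \<partial>M j)"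
proof -
  define F where "F l = (if l = i then g else if l = j then h else (\<lambda>_. 1))" for l
  have F_int: "integrable (M l) (F l)" if "l \<in> I" for l
    using assms(5,6) by (auto simp: F_def)
  have prod_F: "(\<Prod>l\<in>I. u l) = u i * u j" if "\<And>l. l \<in> I - {i, j} \<Longrightarrow> u l = 1" for u :: "'i \<Rightarrow> real"
  proof -
    have "(\<Prod>l\<in>I. u l) = (\<Prod>l\<in>{i, j}. u l)"
      by (rule prod.mono_neutral_right) (use assms that in auto)
    then show ?thesis using assms(4) by simp
  qed
  have eq: "(\<Prod>l\<in>I. F l (x l)) = g (x i) * h (x j)" for x
    using assms(4) by (subst prod_F) (auto simp: F_def)
  show "integrable (PiM I M) (\<lambda>x. g (x i) * h (x j))"
    using product_integrable_prod[OF assms(1) F_int] by (simp add: eq)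
  have "(\<integral>x. g (x i) * h (x j) \<partial>PiM I M) = (\<Prod>l\<in>I. integral\<^sup>L (M l) (F l))"
    using product_integral_prod[OF assms(1) F_int] by (simp add: eq)
  also have "\<dots> = (\<integral>y. g y \<partial>M i) * (\<integral>y. h y \<partial>M j)"
    using assms(4) by (subst prod_F) (auto simp: F_def M.prob_space)
  finally show "(\<integral>x. g (x i) * h (x j) \<partial>PiM I M) = (\<integral>y. g y \<partial>M i) * (\<integral>y. h y \<partial>M j)" .
qed

end

lemma (in product_sigma_finite) integral_PiM_mean_zero_coordinate:
  fixes f :: "'a \<Rightarrow> real" and H :: "('i \<Rightarrow> 'a) \<Rightarrow> real"
  assumes "finite I" "j \<in> I"
    and "integrable (PiM I M) (\<lambda>x. f (x j) * H x)"
    and "(\<integral>y. f y \<partial>M j) = 0"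
    and "\<And>x y. H (x(j := y)) = H x"
  shows "(\<integral>x. f (x j) * H x \<partial>PiM I M) = 0"
proof -
  have I: "I = insert j (I - {j})" using assms(2) by auto
  have "(\<integral>x. f (x j) * H x \<partial>PiM I M)
      = (\<integral>x. (\<integral>y. f y * H (x(j := y)) \<partial>M j) \<partial>PiM (I - {j}) M)"
    using product_integral_insert[of "I - {j}" j "\<lambda>x. f (x j) * H x"] assms(1,3) I by auto
  also have "\<dots> = (\<integral>x. (\<integral>y. f y \<partial>M j) * H x \<partial>PiM (I - {j}) M)"
    by (simp add: assms(5))
  finally show ?thesis using assms(4) by simp
qed

lemma measurable_sum_coordinate_products:
  fixes g h :: "'a \<Rightarrow> real" and \<sigma> :: "'i \<Rightarrow> 'i"
  assumes "\<And>i. i \<in> I \<Longrightarrow> \<sigma> i \<in> I"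
    and [measurable]: "g \<in> borel_measurable M" "h \<in> borel_measurable M"
  shows "(\<lambda>w. \<Sum>i\<in>I. g (w i) * h (w (\<sigma> i))) \<in> borel_measurable (PiM I (\<lambda>_. M))"
proof (rule borel_measurable_sum)
  fix i assume [measurable]: "i \<in> I"
  then have [measurable]: "\<sigma> i \<in> I" by (rule assms(1))
  show "(\<lambda>w. g (w i) * h (w (\<sigma> i))) \<in> borel_measurable (PiM I (\<lambda>_. M))" by measurable
qed

lemma
  fixes f :: "'a \<Rightarrow> real" and B :: real
  assumes "prob_space M" and [measurable]: "f \<in> borel_measurable M"
    and bounded: "\<And>x. \<bar>f x\<bar> \<le> B" and [measurable]: "i \<in> I" "j \<in> I" "k \<in> I" "l \<in> I"
  shows integrable_PiM_coordinate_quadruple: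
      "integrable (PiM I (\<lambda>_. M)) (\<lambda>w. f (w i) * f (w j) * (f (w k) * f (w l)))"
    and integral_PiM_coordinate_quadruple_le:
      "(\<integral>w. f (w i) * f (w j) * (f (w k) * f (w l)) \<partial>PiM I (\<lambda>_. M)) \<le> B ^ 4"
proof -
  interpret P: prob_space "PiM I (\<lambda>_. M)" by (rule prob_space_PiM) (use assms(1) in auto)
  have "0 \<le> B" using bounded[of undefined] by linarith
  then have "\<bar>f (w i) * f (w j) * (f (w k) * f (w l))\<bar> \<le> B * B * B * B" for w
    unfolding abs_mult mult.assoc[symmetric] by (intro mult_mono bounded) auto
  then have bound: "\<bar>f (w i) * f (w j) * (f (w k) * f (w l))\<bar> \<le> B ^ 4" for w
    by (simp add: power4_eq_xxxx)
  show int: "integrable (PiM I (\<lambda>_. M)) (\<lambda>w. f (w i) * f (w j) * (f (w k) * f (w l)))"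
    using bound by (intro P.integrable_const_bound[where B = "B ^ 4"]) auto
  show "(\<integral>w. f (w i) * f (w j) * (f (w k) * f (w l)) \<partial>PiM I (\<lambda>_. M)) \<le> B ^ 4"
    using int bound by (intro P.integral_le_const) (auto intro: abs_le_D1)
qed

context
  fixes M :: "'a measure" and I :: "'i set" and \<sigma> :: "'i \<Rightarrow> 'i"
  assumes prob: "prob_space M" and fin: "finite I" and perm: "\<sigma> permutes I"
    and no_fixpoint: "\<And>i. i \<in> I \<Longrightarrow> \<sigma> i \<noteq> i"
begin

private lemma permutes_in: "i \<in> I \<Longrightarrow> \<sigma> i \<in> I"
  using permutes_in_image[OF perm] by simp

lemma
  fixes g h :: "'a \<Rightarrow> real"
  assumes "integrable M g" "integrable M h"
  shows integrable_derangement_sum: "integrable (PiM I (\<lambda>_. M)) (\<lambda>w. \<Sum>i\<in>I. g (w i) * h (w (\<sigma> i)))"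
    and integral_derangement_sum:
      "(\<integral>w. (\<Sum>i\<in>I. g (w i) * h (w (\<sigma> i))) \<partial>PiM I (\<lambda>_. M)) = card I * (\<integral>x. g x \<partial>M) * (\<integral>x. h x \<partial>M)"
proof -
  interpret product_prob_space "\<lambda>_. M" by (rule product_prob_space_const[OF prob])
  have pair: "i \<noteq> \<sigma> i" if "i \<in> I" for i
    using no_fixpoint[OF that] by simp
  note coord = integrable_PiM_coordinate_pair[OF fin _ permutes_in pair assms]
    integral_PiM_coordinate_pair[OF fin _ permutes_in pair assms]
  show "integrable (PiM I (\<lambda>_. M)) (\<lambda>w. \<Sum>i\<in>I. g (w i) * h (w (\<sigma> i)))"
    using coord by (intro Bochner_Integration.integrable_sum) auto
  then show "(\<integral>w. (\<Sum>i\<in>I. g (w i) * h (w (\<sigma> i))) \<partial>PiM I (\<lambda>_. M))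
      = card I * (\<integral>x. g x \<partial>M) * (\<integral>x. h x \<partial>M)"
    using coord by (subst Bochner_Integration.integral_sum) auto
qed

(* The coordinate sigma i occurs only once in the product, and f has mean zero. *)
lemma integral_derangement_quadruple_eq_0:
  fixes f :: "'a \<Rightarrow> real"
  assumes "integrable (PiM I (\<lambda>_. M)) (\<lambda>w. f (w i) * f (w (\<sigma> i)) * (f (w k) * f (w (\<sigma> k))))"
    and "(\<integral>x. f x \<partial>M) = 0" and "i \<in> I" "k \<in> I" "k \<notin> {i, \<sigma> i}"
  shows "(\<integral>w. f (w i) * f (w (\<sigma> i)) * (f (w k) * f (w (\<sigma> k))) \<partial>PiM I (\<lambda>_. M)) = 0"
proof -
  interpret product_prob_space "\<lambda>_. M" by (rule product_prob_space_const[OF prob])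
  have "\<sigma> i \<noteq> i" "\<sigma> i \<noteq> \<sigma> k"
    using no_fixpoint assms(3,5) permutes_inj[OF perm] by (auto dest: injD)
  then have "(\<integral>w. f (w (\<sigma> i)) * (f (w i) * f (w k) * f (w (\<sigma> k))) \<partial>PiM I (\<lambda>_. M)) = 0"
    using assms fin permutes_in by (intro integral_PiM_mean_zero_coordinate) (auto simp: ac_simps)
  then show ?thesis by (simp add: ac_simps)
qed

lemma
  fixes f :: "'a \<Rightarrow> real" and B :: real
  assumes [measurable]: "f \<in> borel_measurable M"
    and bounded: "\<And>x. \<bar>f x\<bar> \<le> B" and mean_zero: "(\<integral>x. f x \<partial>M) = 0"
  shows integrable_derangement_form_square:
      "integrable (PiM I (\<lambda>_. M)) (\<lambda>w. (\<Sum>i\<in>I. f (w i) * f (w (\<sigma> i)))\<^sup>2)"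
    and integral_derangement_form_square_le:
      "(\<integral>w. (\<Sum>i\<in>I. f (w i) * f (w (\<sigma> i)))\<^sup>2 \<partial>PiM I (\<lambda>_. M)) \<le> 2 * card I * B ^ 4"
proof -
  define T where "T i k w = f (w i) * f (w (\<sigma> i)) * (f (w k) * f (w (\<sigma> k)))" for i k w
  have T_int: "integrable (PiM I (\<lambda>_. M)) (T i k)"
    and T_le: "(\<integral>w. T i k w \<partial>PiM I (\<lambda>_. M)) \<le> B ^ 4" if "i \<in> I" "k \<in> I" for i k
    unfolding T_def[abs_def] using that permutes_in
    by (auto intro!: integrable_PiM_coordinate_quadruple[OF prob assms(1) bounded]
        integral_PiM_coordinate_quadruple_le[OF prob assms(1) bounded])
  have square: "(\<Sum>i\<in>I. f (w i) * f (w (\<sigma> i)))\<^sup>2 = (\<Sum>i\<in>I. \<Sum>k\<in>I. T i k w)" for w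
    unfolding power2_eq_square sum_product T_def ..
  show "integrable (PiM I (\<lambda>_. M)) (\<lambda>w. (\<Sum>i\<in>I. f (w i) * f (w (\<sigma> i)))\<^sup>2)"
    unfolding square using T_int by (intro Bochner_Integration.integrable_sum) auto
  have row: "(\<Sum>k\<in>I. \<integral>w. T i k w \<partial>PiM I (\<lambda>_. M)) \<le> 2 * B ^ 4" if "i \<in> I" for i
  proof -
    have "(\<Sum>k\<in>I. \<integral>w. T i k w \<partial>PiM I (\<lambda>_. M))
        = (\<Sum>k\<in>{i, \<sigma> i}. \<integral>w. T i k w \<partial>PiM I (\<lambda>_. M))"
      using that fin permutes_in T_int[unfolded T_def] mean_zero
      by (intro sum.mono_neutral_right)
        (auto simp: T_def intro!: integral_derangement_quadruple_eq_0)
    also have "\<dots> \<le> card {i, \<sigma> i} * B ^ 4"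
      using that permutes_in T_le by (intro sum_bounded_above) auto
    also have "\<dots> \<le> 2 * B ^ 4"
      by (intro mult_right_mono) (auto simp: card_insert_le_m1)
    finally show ?thesis .
  qed
  have "(\<integral>w. (\<Sum>i\<in>I. f (w i) * f (w (\<sigma> i)))\<^sup>2 \<partial>PiM I (\<lambda>_. M))
      = (\<Sum>i\<in>I. \<Sum>k\<in>I. \<integral>w. T i k w \<partial>PiM I (\<lambda>_. M))"
    unfolding square using T_int
    by (simp add: Bochner_Integration.integral_sum)
  also have "\<dots> \<le> (\<Sum>i\<in>I. 2 * B ^ 4)"
    using row by (rule sum_mono)
  finally show "(\<integral>w. (\<Sum>i\<in>I. f (w i) * f (w (\<sigma> i)))\<^sup>2 \<partial>PiM I (\<lambda>_. M)) \<le> 2 * card I * B ^ 4"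
    by simp
qed

end

lemma (in finite_measure) measure_abs_gt_le_moments:
  fixes Q A S :: "'a \<Rightarrow> real"
  assumes [measurable]: "Q \<in> borel_measurable M" "A \<in> borel_measurable M" "S \<in> borel_measurable M"
    and "integrable M (\<lambda>x. (A x)\<^sup>2)" "integrable M S"
    and Q_le: "\<And>x. \<bar>Q x\<bar> \<le> \<bar>A x\<bar> + S x" and S_nonneg: "\<And>x. 0 \<le> S x" and "0 < c"
  shows "measure M {x \<in> space M. c < \<bar>Q x\<bar>} \<le> 4 * (\<integral>x. (A x)\<^sup>2 \<partial>M) / c\<^sup>2 + 2 * (\<integral>x. S x \<partial>M) / c"
proof -
  have "measure M {x \<in> space M. c < \<bar>Q x\<bar>}
      \<le> measure M ({x \<in> space M. c / 2 \<le> \<bar>A x\<bar>} \<union> {x \<in> space M. c / 2 \<le> S x})"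
  proof (rule finite_measure_mono)
    have "c / 2 \<le> \<bar>A x\<bar> \<or> c / 2 \<le> S x" if "c < \<bar>Q x\<bar>" for x
      using Q_le[of x] that by linarith
    then show "{x \<in> space M. c < \<bar>Q x\<bar>} \<subseteq> {x \<in> space M. c / 2 \<le> \<bar>A x\<bar>} \<union> {x \<in> space M. c / 2 \<le> S x}"
      by auto
  qed measurable
  also have "\<dots> \<le> measure M {x \<in> space M. c / 2 \<le> \<bar>A x\<bar>} + measure M {x \<in> space M. c / 2 \<le> S x}"
    by (rule measure_Un_le) measurable
  also have "\<dots> \<le> (\<integral>x. (A x)\<^sup>2 \<partial>M) / (c / 2)\<^sup>2 + (\<integral>x. S x \<partial>M) / (c / 2)"
    using assms S_nonneg
    by (intro add_mono second_moment_method integral_Markov_inequality_measure[where A = "space M"])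
      auto
  finally show ?thesis
    by (simp add: field_simps)
qed

lemma abs_sum_products_le:
  fixes a b :: "real \<Rightarrow> real" and x :: "'i \<Rightarrow> real"
  assumes "\<And>y. y = a y + b y"
  shows "\<bar>\<Sum>i\<in>I. x i * x (\<sigma> i)\<bar>
    \<le> \<bar>\<Sum>i\<in>I. a (x i) * a (x (\<sigma> i))\<bar>
      + (\<Sum>i\<in>I. \<bar>a (x i)\<bar> * \<bar>b (x (\<sigma> i))\<bar> + \<bar>b (x i)\<bar> * \<bar>x (\<sigma> i)\<bar>)"
    (is "_ \<le> \<bar>?A\<bar> + ?S")
proof -
  have "x i * x (\<sigma> i) = a (x i) * a (x (\<sigma> i)) + (a (x i) * b (x (\<sigma> i)) + b (x i) * x (\<sigma> i))"
    for i
    using assms[of "x i"] assms[of "x (\<sigma> i)"] by algebra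
  then have "\<bar>\<Sum>i\<in>I. x i * x (\<sigma> i)\<bar>
      = \<bar>?A + (\<Sum>i\<in>I. a (x i) * b (x (\<sigma> i)) + b (x i) * x (\<sigma> i))\<bar>"
    by (simp add: sum.distrib)
  also have "\<dots> \<le> \<bar>?A\<bar> + (\<Sum>i\<in>I. \<bar>a (x i) * b (x (\<sigma> i)) + b (x i) * x (\<sigma> i)\<bar>)"
    by (intro order.trans[OF abs_triangle_ineq] add_left_mono sum_abs)
  also have "\<dots> \<le> \<bar>?A\<bar> + ?S"
    by (intro add_left_mono sum_mono) (metis abs_mult abs_triangle_ineq)
  finally show ?thesis .
qed

lemma tendsto_zero_if_eventually_le_vanishing:
  fixes p e C :: "nat \<Rightarrow> real"
  assumes "\<And>n. 0 \<le> p n" "e \<longlonglongrightarrow> 0" "\<And>k. \<forall>\<^sub>F n in sequentially. p n \<le> C k / real n + e k"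
  shows "p \<longlonglongrightarrow> 0"
proof (rule order_tendstoI)
  show "\<forall>\<^sub>F n in sequentially. r < p n" if "r < 0" for r
    using assms(1) that by (auto intro: less_le_trans always_eventually)
  fix r :: real assume "0 < r"
  then obtain k where k: "e k < r / 2"
    using order_tendstoD(2)[OF assms(2), of "r / 2"] unfolding eventually_sequentially
    by (meson half_gt_zero order_refl)
  have "(\<lambda>n. C k * (1 / real n)) \<longlonglongrightarrow> 0"
    using tendsto_mult_right_zero[OF lim_inverse_n'] by simp
  then have "\<forall>\<^sub>F n in sequentially. C k / real n < r / 2"
    using \<open>0 < r\<close> by (auto dest: order_tendstoD(2)[of _ 0 _ "r / 2"])
  with assms(3)[of k] show "\<forall>\<^sub>F n in sequentially. p n < r"
    by eventually_elim (use k in linarith)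
qed

definition truncate :: "real \<Rightarrow> real \<Rightarrow> real" where
  "truncate K x = (if \<bar>x\<bar> \<le> K then x else 0)"

lemma truncate_measurable [measurable]: "truncate K \<in> borel_measurable borel"
  unfolding truncate_def[abs_def] by measurable

lemma abs_truncate_le: "\<bar>truncate K x\<bar> \<le> \<bar>x\<bar>" "0 \<le> K \<Longrightarrow> \<bar>truncate K x\<bar> \<le> K"
  unfolding truncate_def by auto

locale centered_real_law = prob_space M for M :: "real measure" +
  assumes sets_eq_borel [measurable_cong]: "sets M = sets borel"
    and integrable_id: "integrable M (\<lambda>x. x)"
    and integral_id: "(\<integral>x. x \<partial>M) = 0"
begin

definition centered_truncate :: "real \<Rightarrow> real \<Rightarrow> real" where
  "centered_truncate K x = truncate K x - (\<integral>y. truncate K y \<partial>M)"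

definition truncate_rest :: "real \<Rightarrow> real \<Rightarrow> real" where
  "truncate_rest K x = x - centered_truncate K x"

lemma centered_truncate_measurable [measurable]: "centered_truncate K \<in> borel_measurable M"
  and truncate_rest_measurable [measurable]: "truncate_rest K \<in> borel_measurable M"
  unfolding centered_truncate_def[abs_def] truncate_rest_def[abs_def] by measurable

lemma integrable_truncate: "integrable M (truncate K)"
  by (rule Bochner_Integration.integrable_bound[OF integrable_id]) (auto simp: abs_truncate_le(1))

lemma integrable_abs_id: "integrable M (\<lambda>x. \<bar>x\<bar>)"
  using integrable_id by auto

lemma integral_centered_truncate: "(\<integral>x. centered_truncate K x \<partial>M) = 0"
  using integrable_truncate by (simp add: centered_truncate_def prob_space)

lemma integrable_centered_truncate: "integrable M (centered_truncate K)"
  using integrable_truncate by (simp add: centered_truncate_def[abs_def])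

lemma integrable_truncate_rest: "integrable M (truncate_rest K)"
  using integrable_id integrable_centered_truncate by (simp add: truncate_rest_def[abs_def])

lemma abs_centered_truncate_le: "0 \<le> K \<Longrightarrow> \<bar>centered_truncate K x\<bar> \<le> 2 * K"
proof -
  assume "0 \<le> K"
  then have "\<bar>\<integral>y. truncate K y \<partial>M\<bar> \<le> K"
    using integrable_truncate abs_truncate_le(2)
    by (intro order.trans[OF integral_abs_bound_integral] integral_le_const) auto
  then show ?thesis
    using abs_truncate_le(2)[OF \<open>0 \<le> K\<close>, of x] unfolding centered_truncate_def by linarith
qed

lemma integral_abs_centered_truncate_le: "(\<integral>x. \<bar>centered_truncate K x\<bar> \<partial>M) \<le> 2 * (\<integral>x. \<bar>x\<bar> \<partial>M)"
proof -
  have "(\<integral>x. \<bar>centered_truncate K x\<bar> \<partial>M) \<le> (\<integral>x. \<bar>x\<bar> + \<bar>\<integral>y. truncate K y \<partial>M\<bar> \<partial>M)"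
    unfolding centered_truncate_def using integrable_truncate integrable_abs_id abs_truncate_le(1)
    by (intro integral_mono) (auto intro: abs_triangle_ineq4[THEN order.trans])
  also have "\<dots> \<le> 2 * (\<integral>x. \<bar>x\<bar> \<partial>M)"
    using integrable_abs_id integral_abs_bound_integral[OF integrable_truncate integrable_abs_id]
      abs_truncate_le(1) by (simp add: prob_space)
  finally show ?thesis .
qed

lemma integral_abs_truncate_rest_le:
  "(\<integral>x. \<bar>truncate_rest K x\<bar> \<partial>M) \<le> 2 * (\<integral>x. \<bar>x - truncate K x\<bar> \<partial>M)"
proof -
  have int: "integrable M (\<lambda>x. x - truncate K x)"
    using integrable_id integrable_truncate by simp
  have rest: "truncate_rest K x = (x - truncate K x) - (\<integral>y. y - truncate K y \<partial>M)" for x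
    using integrable_id integrable_truncate integral_id
    by (simp add: truncate_rest_def centered_truncate_def)
  have "(\<integral>x. \<bar>truncate_rest K x\<bar> \<partial>M) \<le> (\<integral>x. \<bar>x - truncate K x\<bar> + \<bar>\<integral>y. y - truncate K y \<partial>M\<bar> \<partial>M)"
    unfolding rest using int by (intro integral_mono) (auto intro: abs_triangle_ineq4)
  also have "\<dots> \<le> 2 * (\<integral>x. \<bar>x - truncate K x\<bar> \<partial>M)"
    using int integral_abs_bound_integral[OF int] by (simp add: prob_space)
  finally show ?thesis .
qed

lemma tendsto_integral_abs_sub_truncate: "(\<lambda>k. \<integral>x. \<bar>x - truncate (real k) x\<bar> \<partial>M) \<longlonglongrightarrow> 0"
proof -
  have "(\<lambda>k. \<integral>x. \<bar>x - truncate (real k) x\<bar> \<partial>M) \<longlonglongrightarrow> (\<integral>x. 0 \<partial>M)"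
  proof (rule integral_dominated_convergence[where w = "\<lambda>x. \<bar>x\<bar>"])
    show "AE x in M. (\<lambda>k. \<bar>x - truncate (real k) x\<bar>) \<longlonglongrightarrow> 0"
    proof (rule AE_I2)
      fix x :: real
      obtain N :: nat where "\<bar>x\<bar> \<le> real N" using real_arch_simple by blast
      then have "\<forall>\<^sub>F k in sequentially. \<bar>x - truncate (real k) x\<bar> = 0"
        unfolding eventually_sequentially truncate_def by (intro exI[of _ N]) auto
      then show "(\<lambda>k. \<bar>x - truncate (real k) x\<bar>) \<longlonglongrightarrow> 0"
        by (rule tendsto_eventually)
    qed
  qed (auto simp: integrable_abs_id truncate_def)
  then show ?thesis by simp
qed

lemma tendsto_integral_abs_truncate_rest: "(\<lambda>k. \<integral>x. \<bar>truncate_rest (real k) x\<bar> \<partial>M) \<longlonglongrightarrow> 0"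
proof (rule tendsto_sandwich[OF _ _ tendsto_const])
  show "(\<lambda>k. 2 * \<integral>x. \<bar>x - truncate (real k) x\<bar> \<partial>M) \<longlonglongrightarrow> 0"
    using tendsto_mult_right_zero[OF tendsto_integral_abs_sub_truncate] by simp
qed (simp_all add: always_eventually integral_abs_truncate_rest_le)

end

lemma (in centered_real_law)
  fixes I :: "'i set" and \<sigma> :: "'i \<Rightarrow> 'i" and K :: real
  assumes "finite I" "\<sigma> permutes I" "\<And>i. i \<in> I \<Longrightarrow> \<sigma> i \<noteq> i"
  defines "S \<equiv> \<lambda>w. (\<Sum>i\<in>I. \<bar>centered_truncate K (w i)\<bar> * \<bar>truncate_rest K (w (\<sigma> i))\<bar>)
    + (\<Sum>i\<in>I. \<bar>truncate_rest K (w i)\<bar> * \<bar>w (\<sigma> i)\<bar>)"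
  shows integrable_derangement_truncate_cross: "integrable (PiM I (\<lambda>_. M)) S"
    and integral_derangement_truncate_cross_le:
      "(\<integral>w. S w \<partial>PiM I (\<lambda>_. M))
        \<le> 3 * card I * (\<integral>x. \<bar>x\<bar> \<partial>M) * (\<integral>x. \<bar>truncate_rest K x\<bar> \<partial>M)"
proof -
  note derangement = prob_space_axioms assms(1-3)
  have int_a: "integrable M (\<lambda>x. \<bar>centered_truncate K x\<bar>)"
    and int_b: "integrable M (\<lambda>x. \<bar>truncate_rest K x\<bar>)"
    using integrable_centered_truncate integrable_truncate_rest by auto
  note int = integrable_derangement_sum[OF derangement int_a int_b]
    integrable_derangement_sum[OF derangement int_b integrable_abs_id]
  show "integrable (PiM I (\<lambda>_. M)) S"
    unfolding S_def using int by (rule Bochner_Integration.integrable_add)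
  have "(\<integral>w. S w \<partial>PiM I (\<lambda>_. M))
      = card I * (\<integral>x. \<bar>centered_truncate K x\<bar> \<partial>M) * (\<integral>x. \<bar>truncate_rest K x\<bar> \<partial>M)
        + card I * (\<integral>x. \<bar>truncate_rest K x\<bar> \<partial>M) * (\<integral>x. \<bar>x\<bar> \<partial>M)"
    unfolding S_def using int
      integral_derangement_sum[OF derangement int_a int_b]
      integral_derangement_sum[OF derangement int_b integrable_abs_id]
    by (subst Bochner_Integration.integral_add) auto
  also have "\<dots> \<le> card I * (2 * (\<integral>x. \<bar>x\<bar> \<partial>M)) * (\<integral>x. \<bar>truncate_rest K x\<bar> \<partial>M)
        + card I * (\<integral>x. \<bar>truncate_rest K x\<bar> \<partial>M) * (\<integral>x. \<bar>x\<bar> \<partial>M)"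
    by (intro add_right_mono mult_right_mono mult_left_mono integral_abs_centered_truncate_le) auto
  finally show "(\<integral>w. S w \<partial>PiM I (\<lambda>_. M))
      \<le> 3 * card I * (\<integral>x. \<bar>x\<bar> \<partial>M) * (\<integral>x. \<bar>truncate_rest K x\<bar> \<partial>M)"
    by (simp add: algebra_simps)
qed

lemma (in centered_real_law) measure_derangement_form_gt_le:
  fixes I :: "'i set" and \<sigma> :: "'i \<Rightarrow> 'i" and K c :: real
  assumes fin: "finite I" and perm: "\<sigma> permutes I" and no_fixpoint: "\<And>i. i \<in> I \<Longrightarrow> \<sigma> i \<noteq> i"
    and "0 \<le> K" "0 < c"
  shows "measure (PiM I (\<lambda>_. M)) {w \<in> space (PiM I (\<lambda>_. M)). c < \<bar>\<Sum>i\<in>I. w i * w (\<sigma> i)\<bar>}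
    \<le> 128 * card I * K ^ 4 / c\<^sup>2
      + 6 * card I * (\<integral>x. \<bar>x\<bar> \<partial>M) * (\<integral>x. \<bar>truncate_rest K x\<bar> \<partial>M) / c"
proof -
  interpret P: prob_space "PiM I (\<lambda>_. M)" by (rule prob_space_PiM) (rule prob_space_axioms)
  note derangement = prob_space_axioms fin perm no_fixpoint
  define a where "a = centered_truncate K"
  define b where "b = truncate_rest K"
  define A where "A w = (\<Sum>i\<in>I. a (w i) * a (w (\<sigma> i)))" for w :: "'i \<Rightarrow> real"
  define S where "S w = (\<Sum>i\<in>I. \<bar>a (w i)\<bar> * \<bar>b (w (\<sigma> i))\<bar>) + (\<Sum>i\<in>I. \<bar>b (w i)\<bar> * \<bar>w (\<sigma> i)\<bar>)"
    for w :: "'i \<Rightarrow> real"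
  have [measurable]: "a \<in> borel_measurable M" "b \<in> borel_measurable M"
    unfolding a_def b_def by measurable
  have \<sigma>_in: "\<sigma> i \<in> I" if "i \<in> I" for i
    using permutes_in_image[OF perm] that by simp
  have moments_measurable:
    "(\<lambda>w. \<Sum>i\<in>I. w i * w (\<sigma> i)) \<in> borel_measurable (PiM I (\<lambda>_. M))"
    "A \<in> borel_measurable (PiM I (\<lambda>_. M))" "S \<in> borel_measurable (PiM I (\<lambda>_. M))"
    unfolding A_def[abs_def] S_def[abs_def]
    by (intro borel_measurable_add measurable_sum_coordinate_products[OF \<sigma>_in]; measurable)+
  have a_bound: "\<bar>a x\<bar> \<le> 2 * K" for x
    unfolding a_def by (rule abs_centered_truncate_le) fact
  have int_A2: "integrable (PiM I (\<lambda>_. M)) (\<lambda>w. (A w)\<^sup>2)"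
    unfolding A_def using derangement a_bound integral_centered_truncate
    by (intro integrable_derangement_form_square) (auto simp: a_def)
  have EA2: "(\<integral>w. (A w)\<^sup>2 \<partial>PiM I (\<lambda>_. M)) \<le> 32 * card I * K ^ 4"
    using integral_derangement_form_square_le[OF derangement, of a "2 * K"] a_bound
      integral_centered_truncate
    by (simp add: A_def a_def power_mult_distrib)
  have S_nonneg: "0 \<le> S w" for w
    unfolding S_def by (intro add_nonneg_nonneg sum_nonneg) auto
  have Q_le: "\<bar>\<Sum>i\<in>I. w i * w (\<sigma> i)\<bar> \<le> \<bar>A w\<bar> + S w" for w
    using abs_sum_products_le[where a = a and b = b and x = w and I = I and \<sigma> = \<sigma>]
    unfolding A_def S_def sum.distrib by (simp add: a_def b_def truncate_rest_def)
  have "measure (PiM I (\<lambda>_. M)) {w \<in> space (PiM I (\<lambda>_. M)). c < \<bar>\<Sum>i\<in>I. w i * w (\<sigma> i)\<bar>}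
      \<le> 4 * (\<integral>w. (A w)\<^sup>2 \<partial>PiM I (\<lambda>_. M)) / c\<^sup>2 + 2 * (\<integral>w. S w \<partial>PiM I (\<lambda>_. M)) / c"
    using moments_measurable int_A2 integrable_derangement_truncate_cross[OF fin perm no_fixpoint]
      Q_le S_nonneg \<open>0 < c\<close>
    by (intro P.measure_abs_gt_le_moments) (auto simp: S_def a_def b_def)
  also have "\<dots> \<le> 4 * (32 * card I * K ^ 4) / c\<^sup>2
      + 2 * (3 * card I * (\<integral>x. \<bar>x\<bar> \<partial>M) * (\<integral>x. \<bar>b x\<bar> \<partial>M)) / c"
    using EA2 integral_derangement_truncate_cross_le[OF fin perm no_fixpoint, of K] \<open>0 < c\<close>
    by (intro add_mono divide_right_mono mult_left_mono) (auto simp: S_def a_def b_def)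
  finally show ?thesis by (simp add: b_def)
qed

lemma perm_matrix_trace_zero_derangement:
  assumes "perm_matrix n P" "mat_trace n P = 0"
  obtains \<sigma> where "\<sigma> permutes {..<n}" "\<And>i. i < n \<Longrightarrow> \<sigma> i \<noteq> i"
    "\<And>w. quad_form n P w = (\<Sum>i<n. w i * w (\<sigma> i))"
proof -
  obtain \<sigma> where perm: "\<sigma> permutes {..<n}"
    and P: "\<And>i j. i < n \<Longrightarrow> j < n \<Longrightarrow> P i j = (if \<sigma> i = j then 1 else 0)"
    using assms(1) unfolding perm_matrix_def by blast
  have "\<forall>i\<in>{..<n}. P i i = 0"
    using assms(2) P by (subst sum_nonneg_eq_0_iff[symmetric]) (auto simp: mat_trace_def)
  then have no_fixpoint: "\<sigma> i \<noteq> i" if "i < n" for i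
    using P[of i i] that by auto
  have "quad_form n P w = (\<Sum>i<n. w i * w (\<sigma> i))" for w
  proof -
    have "quad_form n P w = (\<Sum>i<n. \<Sum>j<n. if \<sigma> i = j then w i * w j else 0)"
      unfolding quad_form_def by (intro sum.cong refl) (simp add: P)
    also have "\<dots> = (\<Sum>i<n. w i * w (\<sigma> i))"
      using permutes_in_image[OF perm] by (intro sum.cong refl) auto
    finally show ?thesis .
  qed
  with perm no_fixpoint that show ?thesis by blast
qed

lemma (in centered_real_law) measure_quad_form_gt_le:
  assumes "perm_matrix n P" "mat_trace n P = 0" "0 < n" "0 \<le> K" "0 < \<delta>"
  shows "measure (PiM {..<n} (\<lambda>_. M))
      {w \<in> space (PiM {..<n} (\<lambda>_. M)). \<bar>quad_form n P w\<bar> / real n > \<delta>}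
    \<le> 128 * K ^ 4 / \<delta>\<^sup>2 / real n
      + 6 * (\<integral>x. \<bar>x\<bar> \<partial>M) * (\<integral>x. \<bar>truncate_rest K x\<bar> \<partial>M) / \<delta>"
    (is "?p \<le> _")
proof -
  obtain \<sigma> where derangement: "\<sigma> permutes {..<n}" "\<And>i. i < n \<Longrightarrow> \<sigma> i \<noteq> i"
    and quad: "\<And>w. quad_form n P w = (\<Sum>i<n. w i * w (\<sigma> i))"
    using perm_matrix_trace_zero_derangement[OF assms(1,2)] by metis
  have "\<bar>q\<bar> / real n > \<delta> \<longleftrightarrow> real n * \<delta> < \<bar>q\<bar>" for q
    using \<open>0 < n\<close> by (simp add: pos_less_divide_eq mult.commute)
  then have "?p \<le> 128 * n * K ^ 4 / (real n * \<delta>)\<^sup>2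
      + 6 * n * (\<integral>x. \<bar>x\<bar> \<partial>M) * (\<integral>x. \<bar>truncate_rest K x\<bar> \<partial>M) / (real n * \<delta>)"
    using measure_derangement_form_gt_le[of "{..<n}" \<sigma> K "real n * \<delta>"] derangement assms(3-5)
    by (simp add: quad)
  also have "\<dots> = 128 * K ^ 4 / \<delta>\<^sup>2 / real n
      + 6 * (\<integral>x. \<bar>x\<bar> \<partial>M) * (\<integral>x. \<bar>truncate_rest K x\<bar> \<partial>M) / \<delta>"
    using \<open>0 < n\<close> by (simp add: power2_eq_square ac_simps)
  finally show ?thesis .
qed

lemma in_D1_imp_centered_real_law: "in_D1 \<mu> \<Longrightarrow> centered_real_law \<mu>"
  unfolding in_D1_def centered_real_law_def centered_real_law_axioms_def by blast

theorem lemmaA8: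
  fixes P :: "nat \<Rightarrow> nat \<Rightarrow> nat \<Rightarrow> real" and \<mu> :: "real measure" and \<delta> :: real
  assumes "\<And>n. n \<ge> 2 \<Longrightarrow> perm_matrix n (P n) \<and> mat_trace n (P n) = 0"
    and "in_D1 \<mu>"
    and "\<delta> > 0"
  shows "(\<lambda>n. measure (PiM {..<n} (\<lambda>_. \<mu>))
            {w \<in> space (PiM {..<n} (\<lambda>_. \<mu>)). \<bar>quad_form n (P n) w\<bar> / real n > \<delta>})
         \<longlonglongrightarrow> 0"
proof (rule tendsto_zero_if_eventually_le_vanishing)
  interpret centered_real_law \<mu>
    using assms(2) by (rule in_D1_imp_centered_real_law)
  let ?e = "\<lambda>k. 6 * (\<integral>x. \<bar>x\<bar> \<partial>\<mu>) * (\<integral>x. \<bar>truncate_rest (real k) x\<bar> \<partial>\<mu>) / \<delta>"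
  show "?e \<longlonglongrightarrow> 0"
    by (intro tendsto_divide_zero tendsto_mult_right_zero tendsto_integral_abs_truncate_rest)
  show "\<forall>\<^sub>F n in sequentially. measure (PiM {..<n} (\<lambda>_. \<mu>))
          {w \<in> space (PiM {..<n} (\<lambda>_. \<mu>)). \<bar>quad_form n (P n) w\<bar> / real n > \<delta>}
        \<le> 128 * real k ^ 4 / \<delta>\<^sup>2 / real n + ?e k" for k
    using assms(1,3) by (intro eventually_sequentiallyI[of 2] measure_quad_form_gt_le) auto
qed (rule measure_nonneg)

end
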